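(* For plane binary tree shapes $t$ let $S_t$, $T$ be as in the context. Then \[ \sum_{\substack{t \in \mathcal{B}_{\le n}\\ |t| \ge \log_4 n}} \left(1 - \frac{[z^n]S_t(z)}{[z^n]T(z)}\right) = \mathcal{O}\!\left(\frac{n}{\log n}\right) \quad \text{as } n\to\infty . \]
   Context: A plane binary tree is a rooted tree in which each node has a left and a right slot, each empty or holding a subtree; $\mathcal{B}_{\le n}$ is the set of (unlabeled) plane binary trees with at most $n$ nodes, and $|t|$ is the number of nodes. A plane increasing binary tree of size $n$ is a plane binary tree whose $n$ nodes are labeled $1,\dots,n$ increasingly along every path from the root; their exponential generating function is $T(z)=z/(1-z)$, so $[z^n]T(z)=1$. A fringe subtree is a node with all its descendants; its shape is obtained by forgetting labels. For a shape $t$ with $k$ nodes, $\ell(t)$ is its number of increasing labelings (equal to $k!$ divided by the product of the sizes of all fringe subtrees of $t$) and $w(t)=\ell(t)/k!$. $S_t(z)$ is the exponential generating function of plane increasing binary trees having no fringe subtree of shape $t$; it is the power series solution of $S_t'(z)=(1+S_t(z))^2-w(t)kz^{k-1}$, $S_t(0)=0$. *)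

theory Defs
  imports Complex_Main "HOL-Library.Landau_Symbols"
    "HOL-Computational_Algebra.Formal_Power_Series"
begin

text \<open>Plane binary trees (unlabelled shapes): Leaf is an empty slot.\<close>
datatype btree = Leaf | Node btree btree

fun bsize :: "btree \<Rightarrow> nat" where
  "bsize Leaf = 0"
| "bsize (Node l r) = Suc (bsize l + bsize r)"

fun fringe_prod :: "btree \<Rightarrow> nat" where
  "fringe_prod Leaf = 1"
| "fringe_prod (Node l r) = bsize (Node l r) * fringe_prod l * fringe_prod r"

text \<open>Number of increasing labellings: k! divided by the product of fringe subtree sizes.\<close>
definition nlab :: "btree \<Rightarrow> nat" where
  "nlab t = fact (bsize t) div fringe_prod t"

definition wt :: "btree \<Rightarrow> real" where
  "wt t = real (nlab t) / fact (bsize t)"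

text \<open>EGF of plane increasing binary trees.\<close>
definition T_egf :: "real fps" where
  "T_egf = fps_X / (1 - fps_X)"

definition S_egf :: "btree \<Rightarrow> real fps" where
  "S_egf t = (THE S. fps_deriv S = (1 + S)^2 - fps_const (wt t * real (bsize t)) * fps_X ^ (bsize t - 1)
                    \<and> fps_nth S 0 = 0)"

end

theory Submission
  imports Defs "HOL-Real_Asymp.Real_Asymp"
begin

text \<open>
  Put D = T - S_t. Its coefficients d(n) are the quantities 1 - [z^n] S_t / [z^n] T, and the
  Riccati equation for S_t becomes the recurrence
  (n+1) d(n+1) = sum_{i<=n} (d(i) + d(n-i) - d(i) d(n-i)) + [n+1 = k] w k
  for a shape of size k and weight w. Hence d vanishes below k, equals w at k, stays in [0,1],
  and beyond k satisfies (n+1) d(n+1) <= 2 sum_{i<=n} d(i), so by induction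
  d(n) <= 2 w (n+1) / ((k+1)(k+2)) for n > k. As w(t) is at most the reciprocal of the product
  of the fringe subtree sizes, and these reciprocals sum to 1 over the shapes of each size, the
  shapes of size k < n contribute at most 2(n+1)/((k+1)(k+2)) and those of size n at most 1.
  The series telescopes: summed over k >= log_4 n it is at most 1 + 2(n+1)/log_4 n.
\<close>

lemma fps_nth_T_egf: "fps_nth T_egf n = (if n = 0 then 0 else 1)"
proof -
  have T: "T_egf = fps_X * Abs_fps (\<lambda>_. 1)"
    by (simp add: T_egf_def fps_divide_unit fps_inverse_one_minus_fps_X)
  show ?thesis unfolding T by (cases n) simp_all
qed

text \<open>
  \<open>deficit w k n\<close> is the \<open>n\<close>-th coefficient of \<open>T - S\<^sub>t\<close> for \<open>w = w(t)\<close> and \<open>k = |t|\<close>.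
\<close>
function deficit :: "real \<Rightarrow> nat \<Rightarrow> nat \<Rightarrow> real" where
  "deficit w k 0 = 0"
| "deficit w k (Suc n) =
     ((\<Sum>i\<le>n. deficit w k i + deficit w k (n - i) - deficit w k i * deficit w k (n - i))
      + (if Suc n = k then w * real k else 0)) / real (Suc n)"
  by pat_completeness auto
termination by (relation "measure (\<lambda>(w, k, n). n)") auto

lemma deficit_Suc_eq:
  "real (Suc n) * deficit w k (Suc n) =
     (\<Sum>i\<le>n. deficit w k i + deficit w k (n - i) - deficit w k i * deficit w k (n - i))
     + (if Suc n = k then w * real k else 0)"
  by (simp del: of_nat_Suc)

declare deficit.simps(2) [simp del]

lemma riccati_iff_deficit_rec:
  fixes D :: "real fps"
  assumes "fps_nth D 0 = 0"
  shows "fps_deriv (T_egf - D) = (1 + (T_egf - D))^2 - fps_const (w * real k) * fps_X ^ (k - 1)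
    \<longleftrightarrow> (\<forall>n. real (Suc n) * fps_nth D (Suc n) =
           (\<Sum>i\<le>n. fps_nth D i + fps_nth D (n - i) - fps_nth D i * fps_nth D (n - i))
           + (if Suc n = k then w * real k else 0))"
proof -
  let ?d = "fps_nth D"
  have one_plus: "fps_nth (1 + (T_egf - D)) i = 1 - ?d i" for i
    using assms by (cases i) (simp_all add: fps_nth_T_egf)
  have square: "fps_nth ((1 + (T_egf - D))^2) n
      = real (Suc n) - (\<Sum>i\<le>n. ?d i + ?d (n - i) - ?d i * ?d (n - i))" for n
  proof -
    have "fps_nth ((1 + (T_egf - D))^2) n = (\<Sum>i\<le>n. (1 - ?d i) * (1 - ?d (n - i)))"
      unfolding power2_eq_square fps_mult_nth one_plus by (simp add: atLeast0AtMost)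
    also have "\<dots> = (\<Sum>i\<le>n. 1 - (?d i + ?d (n - i) - ?d i * ?d (n - i)))"
      by (simp add: algebra_simps)
    finally show ?thesis by (simp add: sum_subtractf)
  qed
  have source: "fps_nth (fps_const (w * real k) * fps_X ^ (k - 1)) n
      = (if Suc n = k then w * real k else 0)" for n
    by (cases k) simp_all
  have deriv: "fps_nth (fps_deriv (T_egf - D)) n = real (Suc n) * (1 - ?d (Suc n))" for n
    by (simp add: fps_nth_T_egf algebra_simps)
  show ?thesis
    unfolding fps_eq_iff fps_sub_nth square source deriv
    by (intro all_cong1) (auto simp: right_diff_distrib)
qed

lemma fps_eq_Abs_fps_deficit:
  fixes D :: "real fps"
  assumes "fps_nth D 0 = 0"
    and rec: "\<And>n. real (Suc n) * fps_nth D (Suc n) =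
           (\<Sum>i\<le>n. fps_nth D i + fps_nth D (n - i) - fps_nth D i * fps_nth D (n - i))
           + (if Suc n = k then w * real k else 0)"
  shows "D = Abs_fps (deficit w k)"
proof (rule fps_ext)
  fix n show "fps_nth D n = fps_nth (Abs_fps (deficit w k)) n"
  proof (induction n rule: less_induct)
    case (less n)
    show ?case
    proof (cases n)
      case 0 then show ?thesis using assms(1) by simp
    next
      case (Suc p)
      have "real (Suc p) * fps_nth D (Suc p) = real (Suc p) * deficit w k (Suc p)"
        unfolding rec deficit_Suc_eq using less Suc by (intro sum.cong arg_cong2[where f = "(+)"]) auto
      then show ?thesis using Suc by simp
    qed
  qed
qed

lemma S_egf_eq: "S_egf t = T_egf - Abs_fps (deficit (wt t) (bsize t))"
  unfolding S_egf_def
proof (rule the_equality)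
  show "fps_deriv (T_egf - Abs_fps (deficit (wt t) (bsize t)))
        = (1 + (T_egf - Abs_fps (deficit (wt t) (bsize t))))^2
          - fps_const (wt t * real (bsize t)) * fps_X ^ (bsize t - 1)
      \<and> fps_nth (T_egf - Abs_fps (deficit (wt t) (bsize t))) 0 = 0"
    by (subst riccati_iff_deficit_rec) (simp_all add: deficit_Suc_eq fps_nth_T_egf del: of_nat_Suc)
next
  fix S
  assume S: "fps_deriv S = (1 + S)^2 - fps_const (wt t * real (bsize t)) * fps_X ^ (bsize t - 1)
      \<and> fps_nth S 0 = 0"
  define D where "D = T_egf - S"
  have "S = T_egf - D" and D0: "fps_nth D 0 = 0"
    using S by (simp_all add: D_def fps_nth_T_egf)
  with S have "fps_deriv (T_egf - D) = (1 + (T_egf - D))^2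
      - fps_const (wt t * real (bsize t)) * fps_X ^ (bsize t - 1)"
    by simp
  then have "D = Abs_fps (deficit (wt t) (bsize t))"
    unfolding riccati_iff_deficit_rec[OF D0] using D0 by (intro fps_eq_Abs_fps_deficit) auto
  with \<open>S = T_egf - D\<close> show "S = T_egf - Abs_fps (deficit (wt t) (bsize t))" by simp
qed

lemma one_minus_S_egf_over_T_egf:
  "n \<noteq> 0 \<Longrightarrow> 1 - fps_nth (S_egf t) n / fps_nth T_egf n = deficit (wt t) (bsize t) n"
  by (simp add: S_egf_eq fps_nth_T_egf)

lemma deficit_eq_0: "n < k \<Longrightarrow> deficit w k n = 0"
proof (induction n rule: less_induct)
  case (less n)
  show ?case
  proof (cases n)
    case (Suc p)
    have "(\<Sum>i\<le>p. deficit w k i + deficit w k (p - i) - deficit w k i * deficit w k (p - i)) = 0"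
      using less Suc by (intro sum.neutral) auto
    then show ?thesis using deficit_Suc_eq[of p w k] less.prems Suc by simp
  qed simp
qed

lemma deficit_self:
  assumes "k \<noteq> 0"
  shows "deficit w k k = w"
proof -
  obtain p where k: "k = Suc p" using assms by (cases k) auto
  have "(\<Sum>i\<le>p. deficit w k i + deficit w k (p - i) - deficit w k i * deficit w k (p - i)) = 0"
    using k by (intro sum.neutral) (auto simp: deficit_eq_0)
  then show ?thesis using deficit_Suc_eq[of p w k] k by (simp del: of_nat_Suc)
qed

lemma deficit_bounds:
  assumes "0 \<le> w" "w \<le> 1"
  shows "0 \<le> deficit w k n \<and> deficit w k n \<le> 1"
proof (induction n rule: less_induct)
  case (less n)
  show ?case
  proof (cases n)
    case (Suc p)
    show ?thesis
    proof (cases "n = k")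
      case True
      then show ?thesis using Suc assms deficit_self by auto
    next
      case False
      let ?d = "deficit w k"
      have summand_bounds:
        "0 \<le> ?d i + ?d (p - i) - ?d i * ?d (p - i) \<and> ?d i + ?d (p - i) - ?d i * ?d (p - i) \<le> 1"
        if "i \<le> p" for i
      proof -
        have "0 \<le> ?d i" "?d i \<le> 1" "0 \<le> ?d (p - i)" "?d (p - i) \<le> 1"
          using less Suc that by auto
        moreover have "?d i + ?d (p - i) - ?d i * ?d (p - i) = 1 - (1 - ?d i) * (1 - ?d (p - i))"
          by (simp add: algebra_simps)
        ultimately show ?thesis by (simp add: mult_le_one)
      qed
      have "0 \<le> (\<Sum>i\<le>p. ?d i + ?d (p - i) - ?d i * ?d (p - i))"
        by (rule sum_nonneg) (use summand_bounds in simp)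
      moreover have "(\<Sum>i\<le>p. ?d i + ?d (p - i) - ?d i * ?d (p - i)) \<le> (\<Sum>i\<le>p. 1)"
        by (rule sum_mono) (use summand_bounds in simp)
      ultimately have "0 \<le> real (Suc p) * ?d n" "real (Suc p) * ?d n \<le> real (Suc p) * 1"
        using deficit_Suc_eq[of p w k] Suc False by auto
      then show ?thesis
        by (auto simp: zero_le_mult_iff mult_le_cancel_left_pos simp del: of_nat_Suc)
    qed
  qed simp
qed

lemma deficit_Suc_le:
  assumes "0 \<le> w" "w \<le> 1" "Suc n \<noteq> k"
  shows "real (Suc n) * deficit w k (Suc n) \<le> 2 * (\<Sum>i\<le>n. deficit w k i)"
proof -
  let ?d = "deficit w k"
  have "real (Suc n) * ?d (Suc n) \<le> (\<Sum>i\<le>n. ?d i + ?d (n - i))"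
    unfolding deficit_Suc_eq using assms deficit_bounds by (auto intro!: sum_mono)
  also have "\<dots> = 2 * (\<Sum>i\<le>n. ?d i)"
    using sum.atLeastAtMost_rev[of ?d 0 n] by (simp add: sum.distrib atLeast0AtMost)
  finally show ?thesis .
qed

lemma sum_deficit_le:
  assumes "0 \<le> w" "w \<le> 1" "0 < k" "k \<le> n"
  shows "(\<Sum>i\<le>n. deficit w k i) \<le> w * (real n + 1) * (real n + 2) / ((real k + 1) * (real k + 2))"
  using \<open>k \<le> n\<close>
proof (induction n rule: dec_induct)
  case base
  obtain p where k: "k = Suc p" using \<open>0 < k\<close> gr0_implies_Suc by blast
  have "(\<Sum>i\<le>p. deficit w k i) = 0"
    using k by (intro sum.neutral) (auto simp: deficit_eq_0)
  then have "(\<Sum>i\<le>k. deficit w k i) = w"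
    using k deficit_self[of k w] by simp
  then show ?case using assms by simp
next
  case (step n)
  let ?Q = "(real k + 1) * (real k + 2)"
  have "real (Suc n) * deficit w k (Suc n) \<le> 2 * (\<Sum>i\<le>n. deficit w k i)"
    using assms step by (intro deficit_Suc_le) auto
  also have "\<dots> \<le> 2 * (w * (real n + 1) * (real n + 2) / ?Q)"
    using step.IH by simp
  also have "\<dots> = real (Suc n) * (2 * w * (real n + 2) / ?Q)"
    by (simp add: field_simps)
  finally have "deficit w k (Suc n) \<le> 2 * w * (real n + 2) / ?Q"
    by (subst (asm) mult_le_cancel_left_pos) auto
  then have "(\<Sum>i\<le>Suc n. deficit w k i)
      \<le> w * (real n + 1) * (real n + 2) / ?Q + 2 * w * (real n + 2) / ?Q"
    using step.IH by simp
  also have "\<dots> = w * (real (Suc n) + 1) * (real (Suc n) + 2) / ?Q"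
    by (simp only: add_divide_distrib[symmetric]) (simp add: algebra_simps)
  finally show ?case .
qed

lemma deficit_le:
  assumes "0 \<le> w" "w \<le> 1" "0 < k" "k < n"
  shows "deficit w k n \<le> 2 * w * (real n + 1) / ((real k + 1) * (real k + 2))"
proof -
  let ?Q = "(real k + 1) * (real k + 2)"
  obtain p where n: "n = Suc p" and "k \<le> p" using \<open>k < n\<close> by (cases n) auto
  have "real (Suc p) * deficit w k n \<le> 2 * (\<Sum>i\<le>p. deficit w k i)"
    using assms unfolding n by (intro deficit_Suc_le) auto
  also have "\<dots> \<le> 2 * (w * (real p + 1) * (real p + 2) / ?Q)"
    using assms \<open>k \<le> p\<close> by (intro mult_left_mono sum_deficit_le) auto
  also have "\<dots> = real (Suc p) * (2 * w * (real n + 1) / ?Q)"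
    using n by (simp add: field_simps)
  finally show ?thesis
    by (subst (asm) mult_le_cancel_left_pos) auto
qed

lemma bsize_pos_iff: "0 < bsize t \<longleftrightarrow> t \<noteq> Leaf"
  by (cases t) auto

definition trees_of_size :: "nat \<Rightarrow> btree set" where
  "trees_of_size n = {t. bsize t = n}"

lemma trees_of_size_0: "trees_of_size 0 = {Leaf}"
  unfolding trees_of_size_def by (auto elim: bsize.elims)

lemma trees_of_size_Suc:
  "trees_of_size (Suc n) = (\<lambda>(l, r). Node l r) ` (\<Union>i\<le>n. trees_of_size i \<times> trees_of_size (n - i))"
proof (intro equalityI subsetI)
  fix t assume "t \<in> trees_of_size (Suc n)"
  then obtain l r where "t = Node l r" "bsize l + bsize r = n"
    unfolding trees_of_size_def by (cases t) auto
  then show "t \<in> (\<lambda>(l, r). Node l r) ` (\<Union>i\<le>n. trees_of_size i \<times> trees_of_size (n - i))"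
    unfolding trees_of_size_def by (intro image_eqI[where x = "(l, r)"]) auto
qed (auto simp: trees_of_size_def)

lemma finite_trees_of_size: "finite (trees_of_size n)"
proof (induction n rule: less_induct)
  case (less n)
  then show ?case
    by (cases n) (auto simp: trees_of_size_0 trees_of_size_Suc)
qed

text \<open>Equivalently, the increasing labellings of all shapes of size \<open>n\<close> number \<open>n!\<close>.\<close>
lemma sum_trees_of_size_inverse_fringe_prod:
  "(\<Sum>t\<in>trees_of_size n. 1 / real (fringe_prod t)) = 1"
proof (induction n rule: less_induct)
  case (less n)
  show ?case
  proof (cases n)
    case (Suc p)
    let ?f = "\<lambda>t. 1 / real (fringe_prod t)"
    have "inj_on (\<lambda>(l, r). Node l r) X" for X by (auto simp: inj_on_def)
    then have "(\<Sum>t\<in>trees_of_size n. ?f t)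
        = (\<Sum>(l, r)\<in>(\<Union>i\<le>p. trees_of_size i \<times> trees_of_size (p - i)). ?f (Node l r))"
      unfolding Suc trees_of_size_Suc by (subst sum.reindex) (simp_all add: o_def case_prod_unfold)
    also have "\<dots> = (\<Sum>i\<le>p. \<Sum>(l, r)\<in>trees_of_size i \<times> trees_of_size (p - i). ?f (Node l r))"
      by (intro sum.UNION_disjoint finite_atMost finite_cartesian_product finite_trees_of_size ballI)
        (auto simp: trees_of_size_def)
    also have "\<dots> = (\<Sum>i\<le>p. \<Sum>l\<in>trees_of_size i. \<Sum>r\<in>trees_of_size (p - i).
        1 / real (Suc p) * (?f l * ?f r))"
      by (intro sum.cong refl, unfold sum.cartesian_product[symmetric], intro sum.cong refl)
         (auto simp: trees_of_size_def algebra_simps)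
    also have "\<dots> = (\<Sum>i\<le>p. 1 / real (Suc p) *
        ((\<Sum>l\<in>trees_of_size i. ?f l) * (\<Sum>r\<in>trees_of_size (p - i). ?f r)))"
      unfolding sum_product by (simp only: sum_distrib_left)
    also have "\<dots> = 1"
      using less Suc by simp
    finally show ?thesis .
  qed (simp add: trees_of_size_0)
qed

lemma fringe_prod_pos: "0 < fringe_prod t"
  by (induction t) auto

lemma wt_nonneg: "0 \<le> wt t"
  unfolding wt_def by simp

lemma wt_le_inverse_fringe_prod: "wt t \<le> 1 / real (fringe_prod t)"
proof -
  have "nlab t * fringe_prod t \<le> fact (bsize t)"
    unfolding nlab_def by (rule div_times_less_eq_dividend)
  then have "real (nlab t) * real (fringe_prod t) \<le> fact (bsize t)"
    by (metis of_nat_fact of_nat_le_iff of_nat_mult)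
  then show ?thesis
    using fringe_prod_pos[of t] by (simp add: wt_def divide_simps)
qed

lemma wt_le_1: "wt t \<le> 1"
proof -
  have "1 / real (fringe_prod t) \<le> 1"
    using fringe_prod_pos[of t] by simp
  then show ?thesis
    using wt_le_inverse_fringe_prod[of t] by linarith
qed

lemma sum_by_size:
  assumes "finite K"
  shows "(\<Sum>t\<in>{t. bsize t \<in> K}. h (bsize t) / real (fringe_prod t)) = (\<Sum>k\<in>K. h k)"
proof -
  have "{t. bsize t \<in> K} = (\<Union>k\<in>K. trees_of_size k)"
    by (auto simp: trees_of_size_def)
  then have "(\<Sum>t\<in>{t. bsize t \<in> K}. h (bsize t) / real (fringe_prod t))
      = (\<Sum>k\<in>K. \<Sum>t\<in>trees_of_size k. h (bsize t) / real (fringe_prod t))"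
    by (simp only:)
      (intro sum.UNION_disjoint assms finite_trees_of_size ballI; auto simp: trees_of_size_def)
  also have "\<dots> = (\<Sum>k\<in>K. \<Sum>t\<in>trees_of_size k. h k * (1 / real (fringe_prod t)))"
    by (auto simp: trees_of_size_def intro!: sum.cong)
  also have "\<dots> = (\<Sum>k\<in>K. h k)"
    by (simp add: sum_distrib_left[symmetric] sum_trees_of_size_inverse_fringe_prod
        del: times_divide_eq_right)
  finally show ?thesis .
qed

lemma sum_inverse_consecutive_products:
  "L \<le> N \<Longrightarrow> (\<Sum>k=L..<N. 1 / ((real k + 1) * (real k + 2))) = 1 / (real L + 1) - 1 / (real N + 1)"
proof (induction N rule: dec_induct)
  case (step N)
  have "1 / (real N + 1) - 1 / ((real N + 1) * (real N + 2)) = 1 / (real (Suc N) + 1)"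
    by (simp add: divide_simps) (simp add: algebra_simps)
  with step show ?case by simp
qed simp

definition deficit_majorant :: "nat \<Rightarrow> nat \<Rightarrow> real" where
  "deficit_majorant n k = (if k = n then 1 else 2 * (real n + 1) / ((real k + 1) * (real k + 2)))"

lemma deficit_tree_le:
  assumes "t \<noteq> Leaf" "bsize t \<le> n"
  shows "deficit (wt t) (bsize t) n \<le> deficit_majorant n (bsize t) / real (fringe_prod t)"
proof -
  have "0 < bsize t" using \<open>t \<noteq> Leaf\<close> by (simp add: bsize_pos_iff)
  have "deficit (wt t) (bsize t) n \<le> wt t * deficit_majorant n (bsize t)"
  proof (cases "bsize t = n")
    case False
    then have "deficit (wt t) (bsize t) n
        \<le> 2 * wt t * (real n + 1) / ((real (bsize t) + 1) * (real (bsize t) + 2))"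
      using assms \<open>0 < bsize t\<close> by (intro deficit_le wt_nonneg wt_le_1) auto
    also have "\<dots> = wt t * deficit_majorant n (bsize t)"
      using False by (simp add: deficit_majorant_def)
    finally show ?thesis .
  qed (use \<open>0 < bsize t\<close> in \<open>simp add: deficit_majorant_def deficit_self\<close>)
  also have "\<dots> \<le> deficit_majorant n (bsize t) / real (fringe_prod t)"
    using mult_right_mono[OF wt_le_inverse_fringe_prod[of t], of "deficit_majorant n (bsize t)"]
    by (simp add: deficit_majorant_def)
  finally show ?thesis .
qed

lemma sum_deficit_majorant:
  assumes "L \<le> n"
  shows "(\<Sum>k=L..n. deficit_majorant n k) = 1 + 2 * (real n + 1) * (1 / (real L + 1) - 1 / (real n + 1))"
proof -
  have "(\<Sum>k=L..n. deficit_majorant n k) = (\<Sum>k=L..<n. deficit_majorant n k) + 1"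
    using assms by (simp add: atLeastLessThanSuc_atLeastAtMost[symmetric] deficit_majorant_def)
  also have "(\<Sum>k=L..<n. deficit_majorant n k)
      = 2 * (real n + 1) * (\<Sum>k=L..<n. 1 / ((real k + 1) * (real k + 2)))"
    by (simp add: sum_distrib_left deficit_majorant_def)
  finally show ?thesis
    using assms by (simp add: sum_inverse_consecutive_products)
qed

lemma sum_deficits_le:
  assumes "0 < x" "x \<le> real n"
  shows "(\<Sum>t\<in>{t. t \<noteq> Leaf \<and> bsize t \<le> n \<and> x \<le> real (bsize t)}. deficit (wt t) (bsize t) n)
    \<le> 1 + 2 * (real n + 1) / x"
proof -
  define K where "K = {k. 0 < k \<and> k \<le> n \<and> x \<le> real k}"
  define L where "L = nat \<lceil>x\<rceil>"
  have "L \<le> n" "x \<le> real L"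
    using assms by (auto simp: L_def nat_le_iff ceiling_le_iff)
  have trees: "{t. t \<noteq> Leaf \<and> bsize t \<le> n \<and> x \<le> real (bsize t)} = {t. bsize t \<in> K}"
    unfolding K_def by (auto simp: bsize_pos_iff)
  have "(\<Sum>t\<in>{t. bsize t \<in> K}. deficit (wt t) (bsize t) n)
      \<le> (\<Sum>t\<in>{t. bsize t \<in> K}. deficit_majorant n (bsize t) / real (fringe_prod t))"
    by (intro sum_mono deficit_tree_le) (auto simp: K_def)
  also have "\<dots> = (\<Sum>k\<in>K. deficit_majorant n k)"
    by (rule sum_by_size) (simp add: K_def)
  also have "\<dots> \<le> (\<Sum>k=L..n. deficit_majorant n k)"
    by (intro sum_mono2) (auto simp: K_def L_def deficit_majorant_def nat_le_iff ceiling_le_iff)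
  also have "\<dots> \<le> 1 + 2 * (real n + 1) / x"
  proof -
    have "1 / (real L + 1) \<le> 1 / x"
      using assms \<open>x \<le> real L\<close> by (intro divide_left_mono) auto
    moreover have "0 \<le> 1 / (real n + 1)"
      by simp
    ultimately have "1 / (real L + 1) - 1 / (real n + 1) \<le> 1 / x"
      by linarith
    then have "2 * (real n + 1) * (1 / (real L + 1) - 1 / (real n + 1))
        \<le> 2 * (real n + 1) * (1 / x)"
      by (intro mult_left_mono) auto
    then show ?thesis
      unfolding sum_deficit_majorant[OF \<open>L \<le> n\<close>] by simp
  qed
  finally show ?thesis unfolding trees .
qed

theorem proposition3p8:
  shows "(\<lambda>n::nat. \<Sum>t\<in>{t. t \<noteq> Leaf \<and> bsize t \<le> n \<and> real (bsize t) \<ge> log 4 (real n)}.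
            1 - fps_nth (S_egf t) n / fps_nth T_egf n)
         \<in> O(\<lambda>n. real n / ln (real n))"
proof -
  let ?F = "\<lambda>n::nat. \<Sum>t\<in>{t. t \<noteq> Leaf \<and> bsize t \<le> n \<and> real (bsize t) \<ge> log 4 (real n)}.
            1 - fps_nth (S_egf t) n / fps_nth T_egf n"
  let ?B = "\<lambda>n::nat. 1 + 2 * (real n + 1) / log 4 (real n)"
  have "norm (?F n) \<le> ?B n" if "2 \<le> n" for n
  proof -
    have F: "?F n = (\<Sum>t\<in>{t. t \<noteq> Leaf \<and> bsize t \<le> n \<and> log 4 (real n) \<le> real (bsize t)}.
        deficit (wt t) (bsize t) n)"
      using that by (intro sum.cong) (simp_all add: one_minus_S_egf_over_T_egf)
    have "log 4 (real n) \<le> real n"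
      using that by (intro log_of_power_le) (simp_all add: less_imp_le)
    then have "?F n \<le> ?B n"
      unfolding F using that by (intro sum_deficits_le) auto
    moreover have "0 \<le> ?F n"
      unfolding F by (intro sum_nonneg) (simp add: deficit_bounds wt_nonneg wt_le_1)
    ultimately show ?thesis by simp
  qed
  then have "?F \<in> O(?B)"
    by (intro bigoI[where c = 1]) (auto simp: eventually_at_top_linorder intro!: exI[of _ 2])
  also have "?B \<in> O(\<lambda>n. real n / ln (real n))"
    by real_asymp
  finally show ?thesis .
qed

end
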